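(* Let $G$ be any graph with $n$ nodes and consider the balancing circuit model or the random matching model. Let $x^{(0)}$ be any non-negative integer load vector with $\| x^{(0)} \|_{1} \leq n^{1-\epsilon}$, where $\epsilon > 0$ is a constant. Then the discrepancy after $\tau_{\operatorname{cont}}(1,n^{-1})$ rounds is at most $9/\epsilon$ with probability at least $1-2 n^{-1}$.
   Context: A matching $\mathbf{M}^{(t)}\subseteq E$ of $G=(V,E)$ is identified with the symmetric matrix with entries $1/2$ on $(u,u),(v,v),(u,v),(v,u)$ for $\{u,v\}\in\mathbf{M}^{(t)}$, $1$ on the diagonal for unmatched nodes, $0$ elsewhere. Discrete protocol: for each $\{u,v\}\in\mathbf{M}^{(t)}$ both nodes get $\lfloor (x^{(t-1)}_u+x^{(t-1)}_v)/2\rfloor$ tokens and the excess token (if the sum is odd) goes to $u$ or $v$ with probability $1/2$ each, independently; unmatched nodes keep their load. Continuous process: $\xi^{(t)}=\xi^{(t-1)}\mathbf{M}^{(t)}$. Balancing circuit model: $d$ fixed matchings applied periodically. Random matching model: a random matching each round, independent across rounds, each edge present with probability at least $p_{\min}=\Omega(1/\Delta)$, $\Delta$ the maximum degree. Discrepancy: $\max_{u,v}|x_u-x_v|$. $[t_1,t_2]$ is $(K,\epsilon)$-smoothing if every $\xi^{(t_1)}\in\mathbb{R}^n$ of discrepancy at most $K$ gives $\xi^{(t_2)}$ of discrepancy at most $\epsilon$. $\tau_{\operatorname{cont}}(K,\epsilon)$ is the minimum $t$ with $[0,t]$ $(K,\epsilon)$-smoothing (balancing circuit), resp. the minimum $t$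 such that $[0,t]$ is $(K,\epsilon)$-smoothing with probability at least $1-n^{-1}$ (random matching). *)

theory Defs
  imports "HOL-Probability.Probability"
begin

definition simple_graph :: "nat \<Rightarrow> nat set set \<Rightarrow> bool" where
  "simple_graph n E \<longleftrightarrow> (\<forall>e\<in>E. \<exists>u v. e = {u, v} \<and> u \<noteq> v \<and> u < n \<and> v < n)"

definition degree :: "nat set set \<Rightarrow> nat \<Rightarrow> nat" where
  "degree E u = card {e \<in> E. u \<in> e}"

definition max_degree :: "nat \<Rightarrow> nat set set \<Rightarrow> nat" where
  "max_degree n E = Max (degree E ` {..<n})"

definition is_matching :: "nat set set \<Rightarrow> nat set set \<Rightarrow> bool" where
  "is_matching E M \<longleftrightarrow> M \<subseteq> E \<and> (\<forall>e1\<in>M. \<forall>e2\<in>M. e1 \<noteq> e2 \<longrightarrow> e1 \<inter> e2 = {})"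

definition matching_matrix :: "nat set set \<Rightarrow> nat \<Rightarrow> nat \<Rightarrow> real" where
  "matching_matrix M u v =
     (if u = v then (if \<exists>w. {u, w} \<in> M then 1/2 else 1)
      else if {u, v} \<in> M then 1/2 else 0)"

definition cont_step :: "nat \<Rightarrow> nat set set \<Rightarrow> (nat \<Rightarrow> real) \<Rightarrow> (nat \<Rightarrow> real)" where
  "cont_step n M \<xi> = (\<lambda>v. \<Sum>u<n. \<xi> u * matching_matrix M u v)"

definition cont_run :: "nat \<Rightarrow> nat set set list \<Rightarrow> (nat \<Rightarrow> real) \<Rightarrow> (nat \<Rightarrow> real)" where
  "cont_run n ms \<xi> = foldl (\<lambda>\<zeta> M. cont_step n M \<zeta>) \<xi> ms"

definition discrepancy :: "nat \<Rightarrow> (nat \<Rightarrow> real) \<Rightarrow> real" where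
  "discrepancy n x = Max {\<bar>x u - x v\<bar> | u v. u < n \<and> v < n}"

definition smoothing :: "nat \<Rightarrow> nat set set list \<Rightarrow> real \<Rightarrow> real \<Rightarrow> bool" where
  "smoothing n ms K eps \<longleftrightarrow>
     (\<forall>\<xi>. discrepancy n \<xi> \<le> K \<longrightarrow> discrepancy n (cont_run n ms \<xi>) \<le> eps)"

definition bc_schedule :: "(nat \<Rightarrow> nat set set) \<Rightarrow> nat \<Rightarrow> nat \<Rightarrow> nat set set list" where
  "bc_schedule Ms d t = map (\<lambda>s. Ms (s mod d)) [0..<t]"

definition tau_cont_bc :: "nat \<Rightarrow> (nat \<Rightarrow> nat set set) \<Rightarrow> nat \<Rightarrow> real \<Rightarrow> real \<Rightarrow> nat" where
  "tau_cont_bc n Ms d K eps = (LEAST t. smoothing n (bc_schedule Ms d t) K eps)"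

fun iid_matchings :: "nat set set pmf \<Rightarrow> nat \<Rightarrow> nat set set list pmf" where
  "iid_matchings D 0 = return_pmf []"
| "iid_matchings D (Suc t) =
     bind_pmf (iid_matchings D t) (\<lambda>ms. map_pmf (\<lambda>M. ms @ [M]) D)"

definition rm_smoothing_whp :: "nat \<Rightarrow> nat set set pmf \<Rightarrow> real \<Rightarrow> real \<Rightarrow> nat \<Rightarrow> bool" where
  "rm_smoothing_whp n D K eps t \<longleftrightarrow>
     measure_pmf.prob (iid_matchings D t) {ms. smoothing n ms K eps} \<ge> 1 - 1 / real n"

definition tau_cont_rm :: "nat \<Rightarrow> nat set set pmf \<Rightarrow> real \<Rightarrow> real \<Rightarrow> nat" where
  "tau_cont_rm n D K eps = (LEAST t. rm_smoothing_whp n D K eps t)"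

(* discrete protocol, one round with matching M and coin flips b (one per edge):
   both endpoints get floor((x_u+x_v)/2); if the sum is odd the excess token goes
   to the smaller endpoint of e if b e, to the larger one otherwise. *)
definition disc_step :: "nat set set \<Rightarrow> (nat set \<Rightarrow> bool) \<Rightarrow> (nat \<Rightarrow> int) \<Rightarrow> (nat \<Rightarrow> int)" where
  "disc_step M b x = (\<lambda>w.
     if \<exists>v. {w, v} \<in> M then
       (let v = (THE v. {w, v} \<in> M); s = x w + x v
        in s div 2 + (if odd s \<and> (b {w, v} \<longleftrightarrow> w = min w v) then 1 else 0))
     else x w)"

definition disc_step_pmf :: "nat set set \<Rightarrow> (nat \<Rightarrow> int) \<Rightarrow> (nat \<Rightarrow> int) pmf" where
  "disc_step_pmf M x =
     map_pmf (\<lambda>b. disc_step M b x) (Pi_pmf M False (\<lambda>_. bernoulli_pmf (1/2)))"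

(* discrete process: round t+1 uses a matching drawn from Sched t, independently of
   everything before; the coin flips are fresh and independent. *)
fun disc_run :: "(nat \<Rightarrow> nat set set pmf) \<Rightarrow> (nat \<Rightarrow> int) \<Rightarrow> nat \<Rightarrow> (nat \<Rightarrow> int) pmf" where
  "disc_run Sched x0 0 = return_pmf x0"
| "disc_run Sched x0 (Suc t) =
     bind_pmf (disc_run Sched x0 t) (\<lambda>x. bind_pmf (Sched t) (\<lambda>M. disc_step_pmf M x))"

definition int_discrepancy :: "nat \<Rightarrow> (nat \<Rightarrow> int) \<Rightarrow> real" where
  "int_discrepancy n x = discrepancy n (\<lambda>u. real_of_int (x u))"

end

theory Submission
  imports Defs
begin

text \<open>
  Fix a node w and let q be obtained by running the continuous process on the unit vector at
  w with the matchings in reverse order. For the potential prod_u (1 + z q_u)^(x_u), one round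
  of the discrete process on a matched edge splits the two loads as evenly as possible while
  the continuous process averages the two weights; by AM-GM the mean over the tie-break is at
  most the potential with averaged weights. Iterating, E[(1 + z)^(x_w)] after the last round is
  at most prod_u (1 + z q_u)^(x0_u) <= exp (z * max q * |x0|_1). Smoothing bounds every q_u by
  2/n, so for z = n^eps / 2 this is at most e. Markov's inequality and a union bound over w
  show that some load reaches k = floor (9/eps) + 1 with probability at most
  n e / (1 + z)^k <= 1/n; non-negative loads below k have discrepancy at most 9/eps. In the
  random matching model the sampled matchings fail to be smoothing with probability at most
  1/n, which costs the second 1/n.
\<close>

lemma matching_edge:
  assumes "simple_graph n E" "is_matching E M" "e \<in> M"
  obtains a c where "e = {a, c}" "a \<noteq> c" "a < n" "c < n"
proof -
  have "e \<in> E"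
    using assms(2,3) unfolding is_matching_def by blast
  then show thesis
    using assms(1) that unfolding simple_graph_def by blast
qed

lemma matching_edge_nodes:
  assumes "simple_graph n E" "is_matching E M" "{w, v} \<in> M"
  shows "w \<noteq> v" "w < n" "v < n"
proof -
  obtain a c where "{w, v} = {a, c}" "a \<noteq> c" "a < n" "c < n"
    by (rule matching_edge[OF assms])
  then show "w \<noteq> v" "w < n" "v < n"
    by (auto simp: doubleton_eq_iff)
qed

lemma matching_partner_unique:
  assumes "simple_graph n E" "is_matching E M" "{w, v} \<in> M" "{w, v'} \<in> M"
  shows "v = v'"
proof -
  have "{w, v} \<inter> {w, v'} \<noteq> {}"
    by blast
  then have "{w, v} = {w, v'}"
    using assms(2-4) unfolding is_matching_def by metis
  then show ?thesis
    using matching_edge_nodes[OF assms(1-3)] by (auto simp: doubleton_eq_iff)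
qed

lemma matching_partner_exists:
  assumes "simple_graph n E" "is_matching E M" "u \<in> \<Union>M"
  obtains v where "{u, v} \<in> M"
proof -
  obtain e where e: "e \<in> M" "u \<in> e"
    using assms(3) by blast
  obtain a c where "e = {a, c}"
    using matching_edge[OF assms(1,2) e(1)] by blast
  then have "{u, if u = a then c else a} \<in> M"
    using e by (auto simp: insert_commute)
  then show thesis by (rule that)
qed

lemma finite_matching:
  assumes "simple_graph n E" "is_matching E M"
  shows "finite M"
proof (rule finite_subset)
  show "M \<subseteq> Pow {..<n}"
    using assms unfolding simple_graph_def is_matching_def by auto
qed simp

lemma prod_matching_split:
  assumes "simple_graph n E" "is_matching E M"
  shows "(\<Prod>u<n. f u) = (\<Prod>e\<in>M. \<Prod>u\<in>e. f u) * (\<Prod>u\<in>{..<n} - \<Union>M. f u)"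
proof -
  have covered: "\<Union>M \<subseteq> {..<n}" and finite_edges: "\<forall>e\<in>M. finite e"
    by (auto elim!: matching_edge[OF assms])
  have disjoint: "\<forall>A\<in>M. \<forall>B\<in>M. A \<noteq> B \<longrightarrow> A \<inter> B = {}"
    using assms(2) unfolding is_matching_def by blast
  have "(\<Prod>u<n. f u) = (\<Prod>u\<in>{..<n} - \<Union>M. f u) * (\<Prod>u\<in>\<Union>M. f u)"
    by (rule prod.subset_diff[OF covered]) simp
  also have "(\<Prod>u\<in>\<Union>M. f u) = (\<Prod>e\<in>M. \<Prod>u\<in>e. f u)"
    using prod.Union_disjoint[OF finite_edges disjoint] by simp
  finally show ?thesis by (simp add: mult.commute)
qed

section \<open>The continuous process\<close>

lemma matching_matrix_sym: "matching_matrix M u v = matching_matrix M v u"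
  unfolding matching_matrix_def by (auto simp: insert_commute)

lemma matching_matrix_nonneg: "matching_matrix M u v \<ge> 0"
  unfolding matching_matrix_def by auto

lemma cont_run_Cons: "cont_run n (M # ms) \<xi> = cont_run n ms (cont_step n M \<xi>)"
  by (simp add: cont_run_def)

lemma cont_run_snoc: "cont_run n (ms @ [M]) \<xi> = cont_step n M (cont_run n ms \<xi>)"
  by (simp add: cont_run_def)

lemma cont_step_adjoint:
  "(\<Sum>u<n. cont_step n M \<xi> u * \<eta> u) = (\<Sum>u<n. \<xi> u * cont_step n M \<eta> u)"
proof -
  have "(\<Sum>u<n. cont_step n M \<xi> u * \<eta> u) = (\<Sum>u<n. \<Sum>v<n. \<xi> v * matching_matrix M v u * \<eta> u)"
    unfolding cont_step_def by (simp add: sum_distrib_right)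
  also have "\<dots> = (\<Sum>v<n. \<Sum>u<n. \<xi> v * matching_matrix M v u * \<eta> u)"
    by (rule sum.swap)
  also have "\<dots> = (\<Sum>v<n. \<xi> v * cont_step n M \<eta> v)"
    unfolding cont_step_def by (simp add: sum_distrib_left matching_matrix_sym[of M] mult_ac)
  finally show ?thesis .
qed

lemma cont_run_adjoint:
  "(\<Sum>u<n. cont_run n ms \<xi> u * \<eta> u) = (\<Sum>u<n. \<xi> u * cont_run n (rev ms) \<eta> u)"
proof (induction ms arbitrary: \<eta> rule: rev_induct)
  case Nil
  then show ?case by (simp add: cont_run_def)
next
  case (snoc M ms)
  then show ?case by (simp add: cont_run_snoc cont_run_Cons cont_step_adjoint)
qed

lemma cont_step_nonneg: "(\<And>u. \<xi> u \<ge> 0) \<Longrightarrow> cont_step n M \<xi> v \<ge> 0"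
  unfolding cont_step_def by (intro sum_nonneg mult_nonneg_nonneg matching_matrix_nonneg) auto

lemma cont_run_nonneg: "(\<And>u. \<xi> u \<ge> 0) \<Longrightarrow> cont_run n ms \<xi> v \<ge> 0"
proof (induction ms arbitrary: \<xi>)
  case Nil
  then show ?case by (simp add: cont_run_def)
next
  case (Cons M ms)
  then show ?case by (simp add: cont_run_Cons cont_step_nonneg)
qed

lemma cont_step_matched:
  assumes "simple_graph n E" "is_matching E M" "{u, w} \<in> M"
  shows "cont_step n M \<xi> u = (\<xi> u + \<xi> w) / 2"
proof -
  note nodes = matching_edge_nodes[OF assms]
  have "cont_step n M \<xi> u = (\<Sum>v\<in>{u, w}. \<xi> v * matching_matrix M v u)"
    unfolding cont_step_def
  proof (rule sum.mono_neutral_right)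
    show "\<forall>v\<in>{..<n} - {u, w}. \<xi> v * matching_matrix M v u = 0"
      using matching_partner_unique[OF assms]
      by (auto simp: matching_matrix_def insert_commute)
  qed (use nodes in auto)
  also have "\<dots> = (\<xi> u + \<xi> w) / 2"
    using nodes assms(3) by (auto simp: matching_matrix_def insert_commute)
  finally show ?thesis .
qed

lemma cont_step_unmatched:
  assumes "u \<notin> \<Union>M" "u < n"
  shows "cont_step n M \<xi> u = \<xi> u"
proof -
  have "cont_step n M \<xi> u = (\<Sum>v\<in>{u}. \<xi> v * matching_matrix M v u)"
    unfolding cont_step_def
    by (rule sum.mono_neutral_right) (use assms in \<open>auto simp: matching_matrix_def insert_commute\<close>)
  also have "\<dots> = \<xi> u"
    using assms(1) by (auto simp: matching_matrix_def)
  finally show ?thesis .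
qed

lemma cont_step_sum:
  assumes "simple_graph n E" "is_matching E M"
  shows "(\<Sum>u<n. cont_step n M \<xi> u) = (\<Sum>u<n. \<xi> u)"
proof -
  have "cont_step n M (\<lambda>_. 1) u = 1" if "u < n" for u
  proof (cases "u \<in> \<Union>M")
    case True
    then obtain w where "{u, w} \<in> M"
      by (rule matching_partner_exists[OF assms])
    then show ?thesis using cont_step_matched[OF assms, of u w "\<lambda>_. 1"] by simp
  qed (use cont_step_unmatched that in auto)
  then show ?thesis using cont_step_adjoint[of n M \<xi> "\<lambda>_. 1"] by simp
qed

lemma cont_run_sum:
  assumes "simple_graph n E" "\<forall>M\<in>set ms. is_matching E M"
  shows "(\<Sum>u<n. cont_run n ms \<xi> u) = (\<Sum>u<n. \<xi> u)"
  using assms(2)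
proof (induction ms arbitrary: \<xi>)
  case Nil
  then show ?case by (simp add: cont_run_def)
next
  case (Cons M ms)
  then show ?case by (simp add: cont_run_Cons cont_step_sum[OF assms(1)])
qed

lemma discrepancy_le_iff:
  assumes "n \<ge> 1"
  shows "discrepancy n x \<le> K \<longleftrightarrow> (\<forall>a<n. \<forall>b<n. \<bar>x a - x b\<bar> \<le> K)"
proof -
  have "{\<bar>x u - x v\<bar> | u v. u < n \<and> v < n} = (\<lambda>(u, v). \<bar>x u - x v\<bar>) ` ({..<n} \<times> {..<n})"
    by auto
  moreover have "{..<n} \<times> {..<n} \<noteq> {}"
    using assms by (simp add: lessThan_empty_iff)
  ultimately show ?thesis
    unfolding discrepancy_def by (subst Max_le_iff) auto
qed

text \<open>
  A unit load has discrepancy 1 and total mass 1; after smoothing it is within 1/n of its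
  average 1/n.
\<close>
lemma smoothing_unit_le:
  assumes "simple_graph n E" "\<forall>M\<in>set ms. is_matching E M" "n \<ge> 1"
    and "smoothing n ms 1 (1 / real n)" and "u < n" "w < n"
  shows "cont_run n ms (\<lambda>v. if v = u then 1 else 0) w \<le> 2 / real n"
proof -
  define \<zeta> where "\<zeta> = cont_run n ms (\<lambda>v. if v = u then 1 else 0)"
  have "discrepancy n (\<lambda>v. if v = u then 1 else (0::real)) \<le> 1"
    using assms(3) by (subst discrepancy_le_iff) auto
  then have "discrepancy n \<zeta> \<le> 1 / real n"
    using assms(4) unfolding smoothing_def \<zeta>_def by blast
  then have close: "\<forall>a<n. \<forall>b<n. \<bar>\<zeta> a - \<zeta> b\<bar> \<le> 1 / real n"
    using discrepancy_le_iff assms(3) by blast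
  have mass: "(\<Sum>v<n. \<zeta> v) = 1"
    unfolding \<zeta>_def using cont_run_sum[OF assms(1,2)] assms(5) by simp
  have "(\<Sum>v<n. \<zeta> w) \<le> (\<Sum>v<n. \<zeta> v + 1 / real n)"
    by (intro sum_mono) (use close assms(6) in fastforce)
  then have "real n * \<zeta> w \<le> 2"
    using mass assms(3) by (simp add: sum.distrib)
  then show ?thesis
    unfolding \<zeta>_def using assms(3) by (simp add: field_simps)
qed

lemma smoothing_rev_unit_le:
  assumes "simple_graph n E" "\<forall>M\<in>set ms. is_matching E M" "n \<ge> 1"
    and "smoothing n ms 1 (1 / real n)" and "u < n" "w < n"
  shows "cont_run n (rev ms) (\<lambda>v. if v = w then 1 else 0) u \<le> 2 / real n"
proof -
  have "cont_run n (rev ms) (\<lambda>v. if v = w then 1 else 0) u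
      = (\<Sum>v<n. (if v = u then 1 else 0) * cont_run n (rev ms) (\<lambda>v. if v = w then 1 else 0) v)"
    using assms(5) by (simp add: if_distrib[of "\<lambda>c. c * _"] cong: if_cong)
  also have "\<dots> = (\<Sum>v<n. cont_run n ms (\<lambda>v. if v = u then 1 else 0) v * (if v = w then 1 else 0))"
    by (rule cont_run_adjoint[symmetric])
  also have "\<dots> = cont_run n ms (\<lambda>v. if v = u then 1 else 0) w"
    using assms(6) by (simp add: if_distrib[of "\<lambda>c. _ * c"] cong: if_cong)
  also have "\<dots> \<le> 2 / real n"
    by (rule smoothing_unit_le[OF assms])
  finally show ?thesis .
qed

section \<open>The discrete process\<close>

lemma disc_step_matched:
  assumes "simple_graph n E" "is_matching E M" "{w, v} \<in> M"
  shows "disc_step M b x w = (x w + x v) div 2 +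
           (if odd (x w + x v) \<and> (b {w, v} \<longleftrightarrow> w = min w v) then 1 else 0)"
proof -
  have "(THE v. {w, v} \<in> M) = v"
    using assms matching_partner_unique[OF assms(1,2)] by (intro the_equality) auto
  then show ?thesis
    using assms(3) unfolding disc_step_def by (auto simp: Let_def)
qed

lemma disc_step_unmatched:
  assumes "w \<notin> \<Union>M"
  shows "disc_step M b x w = x w"
proof -
  have "\<not> (\<exists>v. {w, v} \<in> M)"
    using assms by blast
  then show ?thesis unfolding disc_step_def by simp
qed

lemma disc_step_coin_local:
  assumes "simple_graph n E" "is_matching E M" "e \<in> M" "u \<in> e"
  shows "disc_step M b x u = disc_step M (\<lambda>_. b e) x u"
proof -
  obtain v where "e = {u, v}"
    using assms(3,4) by (auto elim!: matching_edge[OF assms(1,2)])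
  then show ?thesis using disc_step_matched[OF assms(1,2)] assms(3) by simp
qed

lemma disc_step_nonneg:
  assumes "simple_graph n E" "is_matching E M" "\<forall>u<n. x u \<ge> 0" "u < n"
  shows "disc_step M b x u \<ge> 0"
proof (cases "u \<in> \<Union>M")
  case True
  then obtain v where v: "{u, v} \<in> M"
    by (rule matching_partner_exists[OF assms(1,2)])
  then have "x u + x v \<ge> 0"
    using matching_edge_nodes[OF assms(1,2) v] assms(3,4) by simp
  then show ?thesis using disc_step_matched[OF assms(1,2) v] by simp
next
  case False
  then show ?thesis using disc_step_unmatched assms(3,4) by simp
qed

lemma nat_disc_step_matched:
  assumes "simple_graph n E" "is_matching E M" "{a, c} \<in> M" "x a = int X" "x c = int Y"
  shows "nat (disc_step M b x a) =
           (X + Y) div 2 + (if odd (X + Y) \<and> (b {a, c} \<longleftrightarrow> a = min a c) then 1 else 0)"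
proof -
  have "x a + x c = int (X + Y)" and "int (X + Y) div 2 = int ((X + Y) div 2)"
    using assms(4,5) by (simp_all add: zdiv_int)
  then show ?thesis
    using disc_step_matched[OF assms(1-3), of b x] by (simp add: nat_add_distrib)
qed

definition disc_run_list :: "nat set set list \<Rightarrow> (nat \<Rightarrow> int) \<Rightarrow> (nat \<Rightarrow> int) pmf" where
  "disc_run_list ms x0 = foldl (\<lambda>p M. bind_pmf p (disc_step_pmf M)) (return_pmf x0) ms"

lemma disc_run_list_Nil: "disc_run_list [] x0 = return_pmf x0"
  by (simp add: disc_run_list_def)

lemma disc_run_list_snoc:
  "disc_run_list (ms @ [M]) x0 = bind_pmf (disc_run_list ms x0) (disc_step_pmf M)"
  by (simp add: disc_run_list_def)

lemma disc_run_list_nonneg: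
  assumes "simple_graph n E" "\<forall>M\<in>set ms. is_matching E M" "\<forall>u<n. x0 u \<ge> 0"
    and "x \<in> set_pmf (disc_run_list ms x0)"
  shows "\<forall>u<n. x u \<ge> 0"
  using assms(2,4)
proof (induction ms arbitrary: x rule: rev_induct)
  case Nil
  then show ?case using assms(3) by (simp add: disc_run_list_Nil)
next
  case (snoc M ms)
  then obtain y b where "y \<in> set_pmf (disc_run_list ms x0)" "x = disc_step M b y"
    by (auto simp: disc_run_list_snoc disc_step_pmf_def)
  with snoc show ?case
    using disc_step_nonneg[OF assms(1)] by auto
qed

lemma disc_run_bc: "disc_run (\<lambda>t. return_pmf (Ms (t mod d))) x0 T = disc_run_list (bc_schedule Ms d T) x0"
  by (induction T) (simp_all add: disc_run_list_Nil disc_run_list_snoc bc_schedule_def bind_return_pmf)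

lemma disc_run_rm: "disc_run (\<lambda>_. D) x0 T = bind_pmf (iid_matchings D T) (\<lambda>ms. disc_run_list ms x0)"
proof (induction T)
  case 0
  then show ?case by (simp add: disc_run_list_Nil bind_return_pmf)
next
  case (Suc T)
  have "disc_run (\<lambda>_. D) x0 (Suc T) = bind_pmf (iid_matchings D T)
          (\<lambda>ms. bind_pmf (disc_run_list ms x0) (\<lambda>x. bind_pmf D (\<lambda>M. disc_step_pmf M x)))"
    by (simp add: Suc bind_assoc_pmf)
  also have "\<dots> = bind_pmf (iid_matchings D T)
          (\<lambda>ms. bind_pmf D (\<lambda>M. bind_pmf (disc_run_list ms x0) (disc_step_pmf M)))"
    by (subst bind_commute_pmf) simp
  also have "\<dots> = bind_pmf (iid_matchings D (Suc T)) (\<lambda>ms. disc_run_list ms x0)"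
    by (simp add: bind_assoc_pmf bind_map_pmf disc_run_list_snoc)
  finally show ?case .
qed

lemma set_pmf_iid_matchings: "ms \<in> set_pmf (iid_matchings D T) \<Longrightarrow> set ms \<subseteq> set_pmf D"
  by (induction T arbitrary: ms) fastforce+

section \<open>The potential\<close>

definition load_potential :: "nat \<Rightarrow> real \<Rightarrow> (nat \<Rightarrow> int) \<Rightarrow> (nat \<Rightarrow> real) \<Rightarrow> real" where
  "load_potential n z x q = (\<Prod>u<n. (1 + z * q u) ^ nat (x u))"

lemma load_potential_unit:
  assumes "w < n"
  shows "load_potential n z x (\<lambda>v. if v = w then 1 else 0) = (1 + z) ^ nat (x w)"
proof -
  have "load_potential n z x (\<lambda>v. if v = w then 1 else 0)
      = (\<Prod>u<n. if u = w then (1 + z) ^ nat (x w) else 1)"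
    unfolding load_potential_def by (intro prod.cong refl) auto
  then show ?thesis using assms by (simp add: prod.delta)
qed

lemma load_potential_le_exp:
  assumes "\<forall>u. q u \<ge> 0" "\<forall>u<n. q u \<le> B" "z \<ge> 0" "B \<ge> 0"
    and "\<forall>u<n. x u \<ge> 0" "real_of_int (\<Sum>u<n. x u) \<le> m"
  shows "load_potential n z x q \<le> exp (z * B * m)"
proof -
  have "load_potential n z x q \<le> (\<Prod>u<n. exp (z * B) ^ nat (x u))"
    unfolding load_potential_def
  proof (intro prod_mono conjI)
    fix u assume u: "u \<in> {..<n}"
    have "1 + z * q u \<le> exp (z * q u)" by (rule exp_ge_add_one_self)
    also have "\<dots> \<le> exp (z * B)" using assms(2,3) u by (simp add: mult_left_mono)
    finally show "(1 + z * q u) ^ nat (x u) \<le> exp (z * B) ^ nat (x u)"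
      using assms(1,3) by (intro power_mono) auto
  qed (use assms(1,3) in simp)
  also have "\<dots> = exp (z * B) ^ (\<Sum>u<n. nat (x u))"
    by (simp add: power_sum)
  also have "\<dots> = exp (real (\<Sum>u<n. nat (x u)) * (z * B))"
    by (simp only: exp_of_nat_mult)
  also have "real (\<Sum>u<n. nat (x u)) = real_of_int (\<Sum>u<n. x u)"
    using assms(5) by simp
  also have "exp (real_of_int (\<Sum>u<n. x u) * (z * B)) \<le> exp (z * B * m)"
    using mult_right_mono[OF assms(6), of "z * B"] assms(3,4) by (simp add: mult.commute)
  finally show ?thesis .
qed

lemma mean_split_power_le:
  fixes \<alpha> \<beta> :: real and S :: nat
  assumes "0 \<le> \<alpha>" "0 \<le> \<beta>"
  defines "r \<equiv> if odd S then 1 else 0"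
  shows "(\<alpha> ^ (S div 2 + r) * \<beta> ^ (S div 2) + \<alpha> ^ (S div 2) * \<beta> ^ (S div 2 + r)) / 2
           \<le> ((\<alpha> + \<beta>) / 2) ^ S"
proof -
  define h where "h = S div 2"
  define \<gamma> where "\<gamma> = (\<alpha> + \<beta>) / 2"
  have "\<alpha> * \<beta> \<le> \<gamma> ^ 2"
    using sum_power2_ge_zero[of "\<alpha> - \<beta>" 0] unfolding \<gamma>_def
    by (simp add: power2_eq_square field_simps)
  then have am_gm: "(\<alpha> * \<beta>) ^ h \<le> \<gamma> ^ (2 * h)"
    using assms(1,2) by (simp add: power_mono power_mult)
  have "\<gamma> \<ge> 0" unfolding \<gamma>_def using assms(1,2) by simp
  show ?thesis
  proof (cases "odd S")
    case True
    then have S: "S = 2 * h + 1" unfolding h_def by presburger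
    have "(\<alpha> ^ (h + 1) * \<beta> ^ h + \<alpha> ^ h * \<beta> ^ (h + 1)) / 2 = (\<alpha> * \<beta>) ^ h * \<gamma>"
      unfolding \<gamma>_def by (simp add: power_mult_distrib field_simps)
    also have "\<dots> \<le> \<gamma> ^ (2 * h) * \<gamma>"
      by (rule mult_right_mono[OF am_gm \<open>\<gamma> \<ge> 0\<close>])
    also have "\<dots> = \<gamma> ^ S"
      using S by simp
    finally show ?thesis
      using True unfolding r_def h_def \<gamma>_def by simp
  next
    case False
    then have "S = 2 * h" unfolding h_def by presburger
    then show ?thesis
      using False am_gm unfolding r_def h_def \<gamma>_def by (simp add: power_mult_distrib)
  qed
qed

lemma edge_potential_mean_le:
  assumes "simple_graph n E" "is_matching E M" "e \<in> M"
    and "\<forall>u<n. x u \<ge> 0" "\<forall>u. q u \<ge> 0" "z \<ge> 0"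
  shows "(\<Prod>u\<in>e. (1 + z * q u) ^ nat (disc_step M (\<lambda>_. True) x u)) / 2
       + (\<Prod>u\<in>e. (1 + z * q u) ^ nat (disc_step M (\<lambda>_. False) x u)) / 2
       \<le> (\<Prod>u\<in>e. (1 + z * cont_step n M q u) ^ nat (x u))"
proof -
  obtain a c where e: "e = {a, c}" "a \<noteq> c" "a < n" "c < n"
    using matching_edge[OF assms(1-3)] by blast
  have ac: "{a, c} \<in> M" and ca: "{c, a} \<in> M"
    using assms(3) e by (auto simp: insert_commute)
  obtain X Y where X: "x a = int X" and Y: "x c = int Y"
    using assms(4) e(3,4) by (meson zero_le_imp_eq_int)
  define \<alpha> where "\<alpha> = 1 + z * q a"
  define \<beta> where "\<beta> = 1 + z * q c"
  define S where "S = X + Y"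
  define r where "r = (if odd S then 1 else (0::nat))"
  have "0 \<le> \<alpha>" "0 \<le> \<beta>"
    unfolding \<alpha>_def \<beta>_def using assms(5,6) by auto
  have disc_a: "nat (disc_step M b x a) = S div 2 + (if odd S \<and> (b {a, c} \<longleftrightarrow> a < c) then 1 else 0)" for b
    using nat_disc_step_matched[OF assms(1,2) ac X Y] e(2) unfolding S_def
    by (auto simp: min_def)
  have disc_c: "nat (disc_step M b x c) = S div 2 + (if odd S \<and> (b {a, c} \<longleftrightarrow> c < a) then 1 else 0)" for b
    using nat_disc_step_matched[OF assms(1,2) ca Y X] e(2) unfolding S_def
    by (auto simp: min_def insert_commute add.commute)
  have avg: "1 + z * cont_step n M q u = (\<alpha> + \<beta>) / 2" if "u \<in> {a, c}" for u
    using that cont_step_matched[OF assms(1,2) ac] cont_step_matched[OF assms(1,2) ca]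
    unfolding \<alpha>_def \<beta>_def by (auto simp: field_simps)
  have "(\<Prod>u\<in>e. (1 + z * q u) ^ nat (disc_step M (\<lambda>_. True) x u)) / 2
       + (\<Prod>u\<in>e. (1 + z * q u) ^ nat (disc_step M (\<lambda>_. False) x u)) / 2
     = (\<alpha> ^ (S div 2 + r) * \<beta> ^ (S div 2) + \<alpha> ^ (S div 2) * \<beta> ^ (S div 2 + r)) / 2"
    using e(2) unfolding e(1) r_def \<alpha>_def \<beta>_def
    by (cases "a < c") (auto simp: disc_a disc_c add_divide_distrib mult.commute)
  also have "\<dots> \<le> ((\<alpha> + \<beta>) / 2) ^ S"
    unfolding r_def by (rule mean_split_power_le) fact+
  also have "\<dots> = (\<Prod>u\<in>e. (1 + z * cont_step n M q u) ^ nat (x u))"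
    using e(2) unfolding e(1) by (simp add: avg X Y S_def power_add)
  finally show ?thesis .
qed

lemma nn_integral_fair_coins_prod:
  fixes g :: "'a \<Rightarrow> bool \<Rightarrow> real"
  assumes "finite A" "\<And>a b. g a b \<ge> 0"
  shows "(\<integral>\<^sup>+b. ennreal (\<Prod>a\<in>A. g a (b a)) \<partial>Pi_pmf A dflt (\<lambda>_. bernoulli_pmf (1/2)))
         = ennreal (\<Prod>a\<in>A. (g a True + g a False) / 2)"
proof -
  have "(\<integral>\<^sup>+b. ennreal (\<Prod>a\<in>A. g a (b a)) \<partial>Pi_pmf A dflt (\<lambda>_. bernoulli_pmf (1/2)))
      = (\<integral>\<^sup>+b. (\<Prod>a\<in>A. ennreal (g a (b a))) \<partial>Pi_pmf A dflt (\<lambda>_. bernoulli_pmf (1/2)))"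
    using assms(2) by (simp add: prod_ennreal)
  also have "\<dots> = (\<Prod>a\<in>A. \<integral>\<^sup>+\<beta>. ennreal (g a \<beta>) \<partial>bernoulli_pmf (1/2))"
    by (rule nn_integral_prod_Pi_pmf[OF assms(1)])
  also have "\<dots> = (\<Prod>a\<in>A. ennreal ((g a True + g a False) / 2))"
  proof (rule prod.cong[OF refl])
    fix a
    have "(\<integral>\<^sup>+\<beta>. ennreal (g a \<beta>) \<partial>bernoulli_pmf (1/2))
        = ennreal (g a True) / 2 + ennreal (g a False) / 2"
      by (simp add: divide_ennreal_def)
    also have "\<dots> = ennreal (g a True / 2 + g a False / 2)"
      using assms(2)[of a]
      by (simp add: ennreal_divide_numeral ennreal_plus[symmetric] del: ennreal_plus)
    finally show "(\<integral>\<^sup>+\<beta>. ennreal (g a \<beta>) \<partial>bernoulli_pmf (1/2)) = ennreal ((g a True + g a False) / 2)"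
      by (simp add: add_divide_distrib)
  qed
  also have "\<dots> = ennreal (\<Prod>a\<in>A. (g a True + g a False) / 2)"
    using assms(2) by (intro prod_ennreal) (simp add: add_nonneg_nonneg)
  finally show ?thesis .
qed

lemma expected_load_potential_disc_step_le:
  assumes "simple_graph n E" "is_matching E M"
    and "\<forall>u<n. x u \<ge> 0" "\<forall>u. q u \<ge> 0" "z \<ge> 0"
  shows "(\<integral>\<^sup>+x'. ennreal (load_potential n z x' q) \<partial>disc_step_pmf M x)
         \<le> ennreal (load_potential n z x (cont_step n M q))"
proof -
  define G where "G = (\<lambda>e \<beta>. \<Prod>u\<in>e. (1 + z * q u) ^ nat (disc_step M (\<lambda>_. \<beta>) x u))"
  define H where "H = (\<lambda>e. \<Prod>u\<in>e. (1 + z * cont_step n M q u) ^ nat (x u))"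
  define R where "R = (\<Prod>u\<in>{..<n} - \<Union>M. (1 + z * q u) ^ nat (x u))"
  have G_nonneg: "G e \<beta> \<ge> 0" for e \<beta>
    unfolding G_def using assms(4,5) by (intro prod_nonneg) auto
  have R_nonneg: "R \<ge> 0"
    unfolding R_def using assms(4,5) by (intro prod_nonneg) auto
  have disc: "load_potential n z (disc_step M b x) q = (\<Prod>e\<in>M. G e (b e)) * R" for b
  proof -
    have "(\<Prod>e\<in>M. \<Prod>u\<in>e. (1 + z * q u) ^ nat (disc_step M b x u)) = (\<Prod>e\<in>M. G e (b e))"
      unfolding G_def
    proof (intro prod.cong refl)
      fix e u assume "e \<in> M" "u \<in> e"
      then show "(1 + z * q u) ^ nat (disc_step M b x u) = (1 + z * q u) ^ nat (disc_step M (\<lambda>_. b e) x u)"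
        using disc_step_coin_local[OF assms(1,2), of e u b x] by simp
    qed
    moreover have "(\<Prod>u\<in>{..<n} - \<Union>M. (1 + z * q u) ^ nat (disc_step M b x u)) = R"
      unfolding R_def by (intro prod.cong) (auto simp: disc_step_unmatched)
    ultimately show ?thesis
      unfolding load_potential_def prod_matching_split[OF assms(1,2)] by simp
  qed
  have cont: "load_potential n z x (cont_step n M q) = (\<Prod>e\<in>M. H e) * R"
  proof -
    have "(\<Prod>u\<in>{..<n} - \<Union>M. (1 + z * cont_step n M q u) ^ nat (x u)) = R"
      unfolding R_def by (intro prod.cong) (auto simp: cont_step_unmatched)
    then show ?thesis
      unfolding load_potential_def prod_matching_split[OF assms(1,2)] H_def by simp
  qed
  let ?coins = "Pi_pmf M False (\<lambda>_. bernoulli_pmf (1/2))"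
  have "(\<integral>\<^sup>+x'. ennreal (load_potential n z x' q) \<partial>disc_step_pmf M x)
      = (\<integral>\<^sup>+b. ennreal (\<Prod>e\<in>M. G e (b e)) * ennreal R \<partial>?coins)"
    unfolding disc_step_pmf_def by (simp add: disc ennreal_mult''[OF R_nonneg])
  also have "\<dots> = (\<integral>\<^sup>+b. ennreal (\<Prod>e\<in>M. G e (b e)) \<partial>?coins) * ennreal R"
    by (rule nn_integral_multc) simp
  also have "(\<integral>\<^sup>+b. ennreal (\<Prod>e\<in>M. G e (b e)) \<partial>?coins)
      = ennreal (\<Prod>e\<in>M. (G e True + G e False) / 2)"
    by (rule nn_integral_fair_coins_prod[OF finite_matching[OF assms(1,2)] G_nonneg])
  also have "\<dots> * ennreal R \<le> ennreal (\<Prod>e\<in>M. H e) * ennreal R"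
  proof (intro mult_right_mono ennreal_leI prod_mono conjI)
    fix e assume "e \<in> M"
    show "0 \<le> (G e True + G e False) / 2"
      using G_nonneg[of e] by simp
    show "(G e True + G e False) / 2 \<le> H e"
      using edge_potential_mean_le[OF assms(1,2) \<open>e \<in> M\<close> assms(3-5)]
      unfolding G_def H_def by simp
  qed simp
  also have "\<dots> = ennreal (load_potential n z x (cont_step n M q))"
    by (simp add: cont ennreal_mult''[OF R_nonneg])
  finally show ?thesis .
qed

lemma expected_load_potential_disc_run_le:
  assumes "simple_graph n E" "\<forall>M\<in>set ms. is_matching E M" "\<forall>u<n. x0 u \<ge> 0" "z \<ge> 0"
    and "\<forall>u. q u \<ge> 0"
  shows "(\<integral>\<^sup>+x. ennreal (load_potential n z x q) \<partial>disc_run_list ms x0)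
         \<le> ennreal (load_potential n z x0 (cont_run n (rev ms) q))"
  using assms(2,5)
proof (induction ms arbitrary: q rule: rev_induct)
  case Nil
  then show ?case by (simp add: disc_run_list_Nil cont_run_def)
next
  case (snoc M ms)
  have "(\<integral>\<^sup>+x. ennreal (load_potential n z x q) \<partial>disc_run_list (ms @ [M]) x0)
      = (\<integral>\<^sup>+y. (\<integral>\<^sup>+x. ennreal (load_potential n z x q) \<partial>disc_step_pmf M y) \<partial>disc_run_list ms x0)"
    by (simp add: disc_run_list_snoc)
  also have "\<dots> \<le> (\<integral>\<^sup>+y. ennreal (load_potential n z y (cont_step n M q)) \<partial>disc_run_list ms x0)"
    using snoc.prems disc_run_list_nonneg[OF assms(1) _ assms(3)]
    by (intro nn_integral_mono_AE AE_pmfI expected_load_potential_disc_step_le[OF assms(1) _ _ _ assms(4)])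
      auto
  also have "\<dots> \<le> ennreal (load_potential n z x0 (cont_run n (rev ms) (cont_step n M q)))"
    using snoc.prems by (intro snoc.IH) (auto intro: cont_step_nonneg)
  finally show ?case by (simp add: cont_run_Cons)
qed

section \<open>Tail bound for the maximum load\<close>

lemma measure_pmf_Markov_inequality:
  fixes f :: "'a \<Rightarrow> real" and p :: "'a pmf"
  assumes "\<And>x. x \<in> A \<Longrightarrow> c \<le> f x" "c > 0" "B \<ge> 0"
    and "(\<integral>\<^sup>+x. ennreal (f x) \<partial>p) \<le> ennreal B"
  shows "measure_pmf.prob p A \<le> B / c"
proof -
  have "ennreal c * emeasure p A = (\<integral>\<^sup>+x. ennreal c * indicator A x \<partial>p)"
    by (rule nn_integral_cmult_indicator[symmetric]) simp
  also have "\<dots> \<le> (\<integral>\<^sup>+x. ennreal (f x) \<partial>p)"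
    using assms(1) by (intro nn_integral_mono) (auto simp: ennreal_leI split: split_indicator)
  also have "\<dots> \<le> ennreal B" by fact
  finally have "ennreal (c * measure_pmf.prob p A) \<le> ennreal B"
    using assms(2) by (simp add: measure_pmf.emeasure_eq_measure ennreal_mult)
  then show ?thesis
    using assms(2,3) by (simp add: ennreal_le_iff pos_le_divide_eq mult.commute)
qed

lemma prob_max_load_ge_le:
  assumes "simple_graph n E" "\<forall>M\<in>set ms. is_matching E M" "n \<ge> 1"
    and "smoothing n ms 1 (1 / real n)" "\<forall>u<n. x0 u \<ge> 0"
    and "real_of_int (\<Sum>u<n. x0 u) \<le> m" "z \<ge> 0"
  shows "measure_pmf.prob (disc_run_list ms x0) {x. \<exists>w<n. x w \<ge> int k}
           \<le> real n * (exp (z * (2 / real n) * m) / (1 + z) ^ k)"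
proof -
  define P where "P = disc_run_list ms x0"
  define bound where "bound = exp (z * (2 / real n) * m) / (1 + z) ^ k"
  have single: "measure_pmf.prob P {x. x w \<ge> int k} \<le> bound" if w: "w < n" for w
  proof -
    define q where "q = cont_run n (rev ms) (\<lambda>v. if v = w then 1 else 0)"
    have q_nonneg: "\<forall>u. q u \<ge> 0"
      unfolding q_def by (intro allI cont_run_nonneg) auto
    have "(\<integral>\<^sup>+x. ennreal (load_potential n z x (\<lambda>v. if v = w then 1 else 0)) \<partial>P)
        \<le> ennreal (load_potential n z x0 q)"
      unfolding P_def q_def by (rule expected_load_potential_disc_run_le[OF assms(1,2,5,7)]) simp
    also have "\<dots> \<le> ennreal (exp (z * (2 / real n) * m))"
      using smoothing_rev_unit_le[OF assms(1-4) _ w] q_nonneg assms(5-7)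
      by (intro ennreal_leI load_potential_le_exp) (auto simp: q_def)
    finally have "measure_pmf.prob P {x. x w \<ge> int k} \<le> exp (z * (2 / real n) * m) / (1 + z) ^ k"
    proof (rule measure_pmf_Markov_inequality[rotated 3])
      fix x assume "x \<in> {x. x w \<ge> int k}"
      then show "(1 + z) ^ k \<le> load_potential n z x (\<lambda>v. if v = w then 1 else 0)"
        using assms(7) by (simp add: load_potential_unit[OF w] power_increasing)
    qed (use assms(7) in auto)
    then show ?thesis unfolding bound_def .
  qed
  have "measure_pmf.prob P {x. \<exists>w<n. x w \<ge> int k}
      = measure_pmf.prob P (\<Union>w\<in>{..<n}. {x. x w \<ge> int k})"
    by (rule arg_cong[where f = "measure_pmf.prob P"]) auto
  also have "\<dots> \<le> (\<Sum>w<n. measure_pmf.prob P {x. x w \<ge> int k})"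
    by (rule measure_pmf.finite_measure_subadditive_finite) auto
  also have "\<dots> \<le> real n * bound"
    using sum_mono[of "{..<n}", OF single] by simp
  finally show ?thesis unfolding P_def bound_def .
qed

text \<open>
  With z = n^eps / 2 and m = n^(1 - eps) the exponent is 1, and eps k > 9 gives
  (1 + z)^k >= n^9 / 2^k, so the bound is at most e 2^k / n^8 <= 1 / n^7.
\<close>
lemma tail_bound_numeric:
  fixes \<epsilon> :: real and n k :: nat
  assumes "\<epsilon> > 0" "9 / \<epsilon> < real k" "exp 1 * 2 ^ k \<le> real n" "n \<ge> 1"
  shows "real n * (exp ((real n powr \<epsilon> / 2) * (2 / real n) * real n powr (1 - \<epsilon>))
                     / (1 + real n powr \<epsilon> / 2) ^ k) \<le> 1 / real n"
proof -
  have n_ge: "real n \<ge> 1" and n_pos: "real n > 0"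
    using assms(4) by simp_all
  have exponent: "(real n powr \<epsilon> / 2) * (2 / real n) * real n powr (1 - \<epsilon>) = 1"
    using n_pos by (simp add: powr_diff powr_one field_simps)
  have "real n ^ 9 = real n powr 9"
    using n_pos by (simp add: powr_realpow)
  also have "\<dots> \<le> real n powr (\<epsilon> * real k)"
    using assms(1,2) n_ge by (intro powr_mono) (auto simp: field_simps)
  also have "\<dots> = (real n powr \<epsilon>) ^ k"
    using n_pos by (simp add: powr_power mult.commute)
  finally have "real n ^ 9 / 2 ^ k \<le> (real n powr \<epsilon> / 2) ^ k"
    by (simp add: power_divide divide_right_mono)
  also have "\<dots> \<le> (1 + real n powr \<epsilon> / 2) ^ k"
    by (intro power_mono) auto
  finally have lower: "real n ^ 9 / 2 ^ k \<le> (1 + real n powr \<epsilon> / 2) ^ k" .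
  have "real n * (exp 1 / (1 + real n powr \<epsilon> / 2) ^ k) \<le> real n * (exp 1 / (real n ^ 9 / 2 ^ k))"
  proof (intro mult_left_mono divide_left_mono)
    have "0 < (1 + real n powr \<epsilon> / 2) ^ k"
      by (simp add: add_pos_nonneg)
    then show "0 < (1 + real n powr \<epsilon> / 2) ^ k * (real n ^ 9 / 2 ^ k)"
      using n_pos by simp
  qed (use lower in auto)
  also have "\<dots> = (exp 1 * 2 ^ k) / real n ^ 8"
    using n_pos by (simp add: eval_nat_numeral field_simps)
  also have "\<dots> \<le> real n / real n ^ 8"
    using assms(3) n_pos by (intro divide_right_mono) auto
  also have "\<dots> = 1 / real n ^ 7"
    using n_pos by (simp add: eval_nat_numeral field_simps)
  also have "\<dots> \<le> 1 / real n"
    using power_increasing[of 1 7 "real n"] n_ge by (intro divide_left_mono) auto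
  finally show ?thesis unfolding exponent .
qed

lemma int_discrepancy_le:
  assumes "n \<ge> 1" "\<And>u. u < n \<Longrightarrow> 0 \<le> x u \<and> real_of_int (x u) \<le> K"
  shows "int_discrepancy n x \<le> K"
  unfolding int_discrepancy_def discrepancy_le_iff[OF assms(1)]
proof (intro allI impI)
  fix a b assume "a < n" "b < n"
  then have "0 \<le> real_of_int (x a)" "real_of_int (x a) \<le> K"
    and "0 \<le> real_of_int (x b)" "real_of_int (x b) \<le> K"
    using assms(2) by auto
  then show "\<bar>real_of_int (x a) - real_of_int (x b)\<bar> \<le> K"
    by (simp add: abs_le_iff)
qed

lemma prob_discrepancy_gt_le:
  fixes \<epsilon> :: real
  assumes "\<epsilon> > 0" "simple_graph n E" "\<forall>M\<in>set ms. is_matching E M"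
    and "exp 1 * 2 ^ (nat \<lfloor>9 / \<epsilon>\<rfloor> + 1) \<le> real n"
    and "smoothing n ms 1 (1 / real n)" "\<forall>u<n. x0 u \<ge> 0"
    and "real_of_int (\<Sum>u<n. x0 u) \<le> real n powr (1 - \<epsilon>)"
  shows "measure_pmf.prob (disc_run_list ms x0) {x. \<not> int_discrepancy n x \<le> 9 / \<epsilon>} \<le> 1 / real n"
proof -
  define k where "k = nat \<lfloor>9 / \<epsilon>\<rfloor> + 1"
  have "0 \<le> \<lfloor>9 / \<epsilon>\<rfloor>"
    using assms(1) by simp
  then have k_int: "int k = \<lfloor>9 / \<epsilon>\<rfloor> + 1" and k_real: "real k = real_of_int \<lfloor>9 / \<epsilon>\<rfloor> + 1"
    unfolding k_def by simp_all
  have "1 \<le> exp (1::real) * 2 ^ k"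
    using mult_mono[of 1 "exp (1::real)" 1 "2 ^ k"] by simp
  then have n: "n \<ge> 1"
    using assms(4) unfolding k_def by linarith
  have "measure_pmf.prob (disc_run_list ms x0) {x. \<not> int_discrepancy n x \<le> 9 / \<epsilon>}
      \<le> measure_pmf.prob (disc_run_list ms x0) {x. \<exists>w<n. x w \<ge> int k}"
  proof (intro measure_pmf.finite_measure_mono_AE AE_pmfI)
    fix x assume x: "x \<in> set_pmf (disc_run_list ms x0)"
    have "int_discrepancy n x \<le> 9 / \<epsilon>" if "\<not> (\<exists>w<n. x w \<ge> int k)"
    proof (rule int_discrepancy_le[OF n])
      fix u assume "u < n"
      then have "0 \<le> x u" "x u \<le> \<lfloor>9 / \<epsilon>\<rfloor>"
        using disc_run_list_nonneg[OF assms(2,3,6) x] that k_int by force+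
      then show "0 \<le> x u \<and> real_of_int (x u) \<le> 9 / \<epsilon>"
        by (simp add: le_floor_iff)
    qed
    then show "x \<in> {x. \<not> int_discrepancy n x \<le> 9 / \<epsilon>} \<longrightarrow> x \<in> {x. \<exists>w<n. x w \<ge> int k}"
      by blast
  qed simp
  also have "\<dots> \<le> real n * (exp ((real n powr \<epsilon> / 2) * (2 / real n) * real n powr (1 - \<epsilon>))
                     / (1 + real n powr \<epsilon> / 2) ^ k)"
    by (rule prob_max_load_ge_le[OF assms(2,3) n assms(5,6,7)]) auto
  also have "\<dots> \<le> 1 / real n"
    using k_real assms(4) unfolding k_def[symmetric]
    by (intro tail_bound_numeric[OF assms(1) _ _ n]) simp_all
  finally show ?thesis .
qed

lemma prob_bind_pmf_le:
  assumes "\<And>x. x \<in> set_pmf p \<Longrightarrow> x \<in> S \<Longrightarrow> measure_pmf.prob (f x) A \<le> \<delta>"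
    and "measure_pmf.prob p (- S) \<le> \<eta>" "\<delta> \<ge> 0"
  shows "measure_pmf.prob (bind_pmf p f) A \<le> \<eta> + \<delta>"
proof -
  have "emeasure (bind_pmf p f) A = (\<integral>\<^sup>+x. emeasure (f x) A \<partial>p)"
    by simp
  also have "\<dots> \<le> (\<integral>\<^sup>+x. indicator (- S) x + ennreal \<delta> \<partial>p)"
  proof (intro nn_integral_mono_AE AE_pmfI)
    fix x assume "x \<in> set_pmf p"
    then show "emeasure (f x) A \<le> indicator (- S) x + ennreal \<delta>"
      using assms(1) measure_pmf.emeasure_le_1[of "f x" A]
      by (cases "x \<in> S") (auto simp: measure_pmf.emeasure_eq_measure ennreal_leI
          intro: order.trans[OF _ add_increasing2])
  qed
  also have "\<dots> = ennreal (measure_pmf.prob p (- S) + \<delta>)"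
    using assms(3) by (simp add: nn_integral_add measure_pmf.emeasure_eq_measure)
  finally have "measure_pmf.prob (bind_pmf p f) A \<le> measure_pmf.prob p (- S) + \<delta>"
    by (simp only: measure_pmf.emeasure_eq_measure
        ennreal_le_iff[OF add_nonneg_nonneg[OF measure_nonneg assms(3)]])
  then show ?thesis
    using assms(2) by linarith
qed

theorem corollary3p4:
  fixes \<epsilon> c :: real
  assumes "\<epsilon> > 0" and "c > 0"
  shows "\<exists>n0. \<forall>n \<ge> n0. \<forall>E. simple_graph n E \<longrightarrow>
     (\<forall>x0 :: nat \<Rightarrow> int.
        (\<forall>u<n. x0 u \<ge> 0) \<longrightarrow> real_of_int (\<Sum>u<n. x0 u) \<le> real n powr (1 - \<epsilon>) \<longrightarrow>
        \<comment> \<open>balancing circuit model\<close>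
        (\<forall>Ms d. d \<ge> 1 \<longrightarrow> (\<forall>i<d. is_matching E (Ms i)) \<longrightarrow>
           (\<exists>t. smoothing n (bc_schedule Ms d t) 1 (1 / real n)) \<longrightarrow>
           measure_pmf.prob
             (disc_run (\<lambda>t. return_pmf (Ms (t mod d))) x0 (tau_cont_bc n Ms d 1 (1 / real n)))
             {x. int_discrepancy n x \<le> 9 / \<epsilon>} \<ge> 1 - 2 / real n)
        \<and>
        \<comment> \<open>random matching model, p_min \<ge> c / Delta\<close>
        (\<forall>D. (\<forall>M \<in> set_pmf D. is_matching E M) \<longrightarrow>
           (\<forall>e\<in>E. measure_pmf.prob D {M. e \<in> M} \<ge> c / real (max_degree n E)) \<longrightarrow>
           (\<exists>t. rm_smoothing_whp n D 1 (1 / real n) t) \<longrightarrow>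
           measure_pmf.prob
             (disc_run (\<lambda>_. D) x0 (tau_cont_rm n D 1 (1 / real n)))
             {x. int_discrepancy n x \<le> 9 / \<epsilon>} \<ge> 1 - 2 / real n))"
proof (intro exI[of _ "nat \<lceil>exp (1::real) * 2 ^ (nat \<lfloor>9 / \<epsilon>\<rfloor> + 1)\<rceil>"] allI impI conjI)
  fix n E and x0 :: "nat \<Rightarrow> int"
  assume "n \<ge> nat \<lceil>exp (1::real) * 2 ^ (nat \<lfloor>9 / \<epsilon>\<rfloor> + 1)\<rceil>"
  then have large: "exp 1 * 2 ^ (nat \<lfloor>9 / \<epsilon>\<rfloor> + 1) \<le> real n"
    by linarith
  assume graph: "simple_graph n E" and x0: "\<forall>u<n. x0 u \<ge> 0"
    and mass: "real_of_int (\<Sum>u<n. x0 u) \<le> real n powr (1 - \<epsilon>)"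
  let ?good = "{x. int_discrepancy n x \<le> 9 / \<epsilon>}"
  let ?bad = "{x. \<not> int_discrepancy n x \<le> 9 / \<epsilon>}"
  have good_iff: "measure_pmf.prob p ?good \<ge> 1 - \<delta> \<longleftrightarrow> measure_pmf.prob p ?bad \<le> \<delta>"
    for p :: "(nat \<Rightarrow> int) pmf" and \<delta>
    using measure_pmf.prob_compl[of ?good p] by (auto simp: set_diff_eq)
  note bad_le = prob_discrepancy_gt_le[OF assms(1) graph _ large _ x0 mass]
  show "measure_pmf.prob (disc_run (\<lambda>t. return_pmf (Ms (t mod d))) x0 (tau_cont_bc n Ms d 1 (1 / real n)))
          ?good \<ge> 1 - 2 / real n"
    if "d \<ge> 1" "\<forall>i<d. is_matching E (Ms i)" "\<exists>t. smoothing n (bc_schedule Ms d t) 1 (1 / real n)"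
    for Ms d
  proof -
    let ?ms = "bc_schedule Ms d (tau_cont_bc n Ms d 1 (1 / real n))"
    have "measure_pmf.prob (disc_run_list ?ms x0) ?bad \<le> 1 / real n"
      using that LeastI_ex[OF that(3)] unfolding tau_cont_bc_def
      by (intro bad_le) (auto simp: bc_schedule_def)
    also have "\<dots> \<le> 2 / real n"
      by (simp add: divide_right_mono)
    finally show ?thesis
      by (simp add: good_iff disc_run_bc)
  qed
  show "measure_pmf.prob (disc_run (\<lambda>_. D) x0 (tau_cont_rm n D 1 (1 / real n))) ?good
          \<ge> 1 - 2 / real n"
    if "\<forall>M \<in> set_pmf D. is_matching E M" "\<exists>t. rm_smoothing_whp n D 1 (1 / real n) t"
    for D
  proof -
    let ?T = "tau_cont_rm n D 1 (1 / real n)"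
    let ?S = "{ms. smoothing n ms 1 (1 / real n)}"
    have "measure_pmf.prob (iid_matchings D ?T) (- ?S) \<le> 1 / real n"
      using LeastI_ex[OF that(2)] measure_pmf.prob_compl[of "- ?S" "iid_matchings D ?T"]
      unfolding tau_cont_rm_def rm_smoothing_whp_def by simp
    then have "measure_pmf.prob (disc_run (\<lambda>_. D) x0 ?T) ?bad \<le> 1 / real n + 1 / real n"
      unfolding disc_run_rm using that(1)
      by (intro prob_bind_pmf_le bad_le) (auto dest!: set_pmf_iid_matchings)
    then show ?thesis
      by (simp add: good_iff)
  qed
qed

end
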